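(* Consider $N$ users indexed by $\mathcal{U}=\{1,\dots,N\}$ with fixed channel power gains $h_1,\dots,h_N>0$, noise variance $\eta>0$, target throughputs $\theta_1,\dots,\theta_N>0$, and strategy sets $\mathcal{P}^i=[0,P_i^{max}]$ with $P_i^{max}>0$. For $\mathbf{P}\in\prod_i\mathcal{P}^i$ let $r_i(\mathbf{P})=\log_2\!\big(1+\frac{h_iP_i}{\eta+\sum_{j\neq i}h_jP_j}\big)$, and suppose the set $\mathcal{S}$ of profiles with $r_i(\mathbf{P})\ge\theta_i$ for all $i$ is non-empty. Let $\mathbf{P}^+$ be the efficient satisfaction equilibrium, i.e. the minimizer of $\sum_iP_i$ over $\mathcal{S}$. If for users $i,j$ we have $\theta_i\le\theta_j$, then $P_i^+h_i\le P_j^+h_j$. *)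

theory Defs
  imports Complex_Main
begin

text \<open>Users are indexed by {1..N}; a power profile is a function nat => real
  (only its values on {1..N} matter).\<close>

definition rate :: "nat \<Rightarrow> (nat \<Rightarrow> real) \<Rightarrow> real \<Rightarrow> (nat \<Rightarrow> real) \<Rightarrow> nat \<Rightarrow> real" where
  "rate N h \<eta> P i =
     log 2 (1 + h i * P i / (\<eta> + (\<Sum>j\<in>{1..N} - {i}. h j * P j)))"

definition feasible_profiles :: "nat \<Rightarrow> (nat \<Rightarrow> real) \<Rightarrow> real \<Rightarrow> (nat \<Rightarrow> real) \<Rightarrow> (nat \<Rightarrow> real) \<Rightarrow> (nat \<Rightarrow> real) set" where
  "feasible_profiles N h \<eta> \<theta> Pmax =
     {P. (\<forall>i\<in>{1..N}. 0 \<le> P i \<and> P i \<le> Pmax i) \<and>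
         (\<forall>i\<in>{1..N}. rate N h \<eta> P i \<ge> \<theta> i)}"

definition efficient_SE :: "nat \<Rightarrow> (nat \<Rightarrow> real) \<Rightarrow> real \<Rightarrow> (nat \<Rightarrow> real) \<Rightarrow> (nat \<Rightarrow> real) \<Rightarrow> (nat \<Rightarrow> real) \<Rightarrow> bool" where
  "efficient_SE N h \<eta> \<theta> Pmax P \<longleftrightarrow>
     P \<in> feasible_profiles N h \<eta> \<theta> Pmax \<and>
     (\<forall>Q\<in>feasible_profiles N h \<eta> \<theta> Pmax. (\<Sum>k\<in>{1..N}. P k) \<le> (\<Sum>k\<in>{1..N}. Q k))"

end

theory Submission
  imports Defs
begin

text \<open>If h i P i > h j P j held at the efficient equilibrium, lower
  P i until h i P i = h j P j. Nobody else's interference grows, and user i now sees exactly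
  the signal of user j against no more interference than j sees (all received powers except
  its own, the larger one), so i still reaches \<theta> j \<ge> \<theta> i. The profile stays feasible with
  strictly smaller total power, contradicting efficiency.\<close>

lemma log2_one_plus_div_mono:
  fixes s s' d d' :: real
  assumes "0 \<le> s" "s \<le> s'" "0 < d'" "d' \<le> d"
  shows "log 2 (1 + s / d) \<le> log 2 (1 + s' / d')"
proof -
  have "s / d \<le> s' / d'" using assms by (intro frac_le) auto
  moreover have "0 \<le> s / d" using assms by auto
  ultimately show ?thesis by (subst log_le_cancel_iff) auto
qed

lemma interference_pos:
  fixes h P :: "nat \<Rightarrow> real"
  assumes "\<forall>k\<in>{1..N}. h k > 0" "\<eta> > 0" "\<forall>k\<in>{1..N}. 0 \<le> P k"
  shows "0 < \<eta> + (\<Sum>k\<in>{1..N} - {i}. h k * P k)"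
proof -
  have "0 \<le> (\<Sum>k\<in>{1..N} - {i}. h k * P k)"
    using assms by (intro sum_nonneg) (simp add: less_imp_le)
  with \<open>\<eta> > 0\<close> show ?thesis by linarith
qed

lemma rate_mono_lower_others:
  assumes h: "\<forall>k\<in>{1..N}. h k > 0" and "\<eta> > 0" and "i \<in> {1..N}"
    and Q_nonneg: "\<forall>k\<in>{1..N}. 0 \<le> Q k" and Q_le: "\<forall>k\<in>{1..N}. Q k \<le> P k"
    and own: "Q i = P i"
  shows "rate N h \<eta> P i \<le> rate N h \<eta> Q i"
  unfolding rate_def
proof (rule log2_one_plus_div_mono)
  show "0 \<le> h i * P i" using assms by (metis less_imp_le mult_nonneg_nonneg)
  show "h i * P i \<le> h i * Q i" using own by simp
  show "0 < \<eta> + (\<Sum>k\<in>{1..N} - {i}. h k * Q k)"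
    using interference_pos assms by blast
  have "(\<Sum>k\<in>{1..N} - {i}. h k * Q k) \<le> (\<Sum>k\<in>{1..N} - {i}. h k * P k)"
    using h Q_le by (intro sum_mono mult_left_mono) (auto intro: less_imp_le)
  then show "\<eta> + (\<Sum>k\<in>{1..N} - {i}. h k * Q k) \<le> \<eta> + (\<Sum>k\<in>{1..N} - {i}. h k * P k)"
    by simp
qed

text \<open>Both interference terms are the total received power minus one's own received power.\<close>

lemma rate_le_rate_of_stronger_user:
  assumes h: "\<forall>k\<in>{1..N}. h k > 0" and "\<eta> > 0" and P_nonneg: "\<forall>k\<in>{1..N}. 0 \<le> P k"
    and i: "i \<in> {1..N}" and j: "j \<in> {1..N}"
    and weaker: "h j * P j \<le> h i * P i" and signal: "h j * P j \<le> h i * q"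
  shows "rate N h \<eta> P j \<le> rate N h \<eta> (P(i := q)) i"
  unfolding rate_def
proof (rule log2_one_plus_div_mono)
  show "0 \<le> h j * P j" using h P_nonneg j by (simp add: less_imp_le)
  show "h j * P j \<le> h i * (P(i := q)) i" using signal by simp
  have same: "(\<Sum>k\<in>{1..N} - {i}. h k * (P(i := q)) k) = (\<Sum>k\<in>{1..N} - {i}. h k * P k)"
    by (intro sum.cong) auto
  then show "0 < \<eta> + (\<Sum>k\<in>{1..N} - {i}. h k * (P(i := q)) k)"
    using interference_pos assms by metis
  have "(\<Sum>k\<in>{1..N} - {i}. h k * P k) \<le> (\<Sum>k\<in>{1..N} - {j}. h k * P k)"
    using weaker i j by (simp add: sum_diff1)
  with same show "\<eta> + (\<Sum>k\<in>{1..N} - {i}. h k * (P(i := q)) k)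
      \<le> \<eta> + (\<Sum>k\<in>{1..N} - {j}. h k * P k)"
    by simp
qed

lemma feasible_lower_stronger_user:
  assumes h: "\<forall>k\<in>{1..N}. h k > 0" and "\<eta> > 0"
    and P: "P \<in> feasible_profiles N h \<eta> \<theta> Pmax"
    and i: "i \<in> {1..N}" and j: "j \<in> {1..N}"
    and "\<theta> i \<le> \<theta> j" and stronger: "h j * P j < h i * P i"
  shows "P(i := h j * P j / h i) \<in> feasible_profiles N h \<eta> \<theta> Pmax"
proof -
  define Q where "Q = P(i := h j * P j / h i)"
  have bounds: "\<forall>k\<in>{1..N}. 0 \<le> P k \<and> P k \<le> Pmax k"
    and rates: "\<forall>k\<in>{1..N}. \<theta> k \<le> rate N h \<eta> P k"
    using P unfolding feasible_profiles_def by auto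
  have hi: "h i > 0" and hj: "h j > 0" using h i j by auto
  have Qi: "h i * Q i = h j * P j" using hi by (simp add: Q_def)
  have "0 \<le> Q i" using hi hj bounds j by (simp add: Q_def)
  moreover have "Q i < P i" using Qi stronger hi by (metis mult_less_cancel_left_pos)
  ultimately have Q_nonneg: "\<forall>k\<in>{1..N}. 0 \<le> Q k" and Q_le: "\<forall>k\<in>{1..N}. Q k \<le> P k"
    using bounds by (auto simp: Q_def)
  have "\<theta> k \<le> rate N h \<eta> Q k" if k: "k \<in> {1..N}" for k
  proof (cases "k = i")
    case True
    have "rate N h \<eta> P j \<le> rate N h \<eta> Q i"
      unfolding Q_def using assms bounds Qi[unfolded Q_def]
      by (intro rate_le_rate_of_stronger_user) auto
    with rates j \<open>\<theta> i \<le> \<theta> j\<close> True show ?thesis by fastforce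
  next
    case False
    then have "rate N h \<eta> P k \<le> rate N h \<eta> Q k"
      using assms k Q_nonneg Q_le by (intro rate_mono_lower_others) (auto simp: Q_def)
    with rates k show ?thesis by fastforce
  qed
  with Q_nonneg Q_le bounds show ?thesis
    unfolding Q_def[symmetric] feasible_profiles_def by force
qed

theorem proposition3:
  fixes N :: nat and h \<theta> Pmax Pp :: "nat \<Rightarrow> real" and \<eta> :: real and i j :: nat
  assumes h_pos: "\<forall>k\<in>{1..N}. h k > 0"
    and eta_pos: "\<eta> > 0"
    and theta_pos: "\<forall>k\<in>{1..N}. \<theta> k > 0"
    and Pmax_pos: "\<forall>k\<in>{1..N}. Pmax k > 0"
    and S_nonempty: "feasible_profiles N h \<eta> \<theta> Pmax \<noteq> {}"
    and eff: "efficient_SE N h \<eta> \<theta> Pmax Pp"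
    and i: "i \<in> {1..N}" and j: "j \<in> {1..N}"
    and le: "\<theta> i \<le> \<theta> j"
  shows "Pp i * h i \<le> Pp j * h j"
proof (rule ccontr)
  assume "\<not> ?thesis"
  then have stronger: "h j * Pp j < h i * Pp i" by (simp add: mult.commute)
  define Q where "Q = Pp(i := h j * Pp j / h i)"
  have feasible: "Pp \<in> feasible_profiles N h \<eta> \<theta> Pmax"
    and minimal: "\<forall>R\<in>feasible_profiles N h \<eta> \<theta> Pmax. (\<Sum>k\<in>{1..N}. Pp k) \<le> (\<Sum>k\<in>{1..N}. R k)"
    using eff unfolding efficient_SE_def by auto
  have "Q \<in> feasible_profiles N h \<eta> \<theta> Pmax"
    unfolding Q_def using h_pos eta_pos feasible i j le stronger
    by (rule feasible_lower_stronger_user)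
  moreover have "(\<Sum>k\<in>{1..N}. Q k) < (\<Sum>k\<in>{1..N}. Pp k)"
  proof (rule sum_strict_mono_ex1)
    have "Q i < Pp i" using stronger h_pos i by (simp add: Q_def pos_divide_less_eq mult.commute)
    then show "\<forall>k\<in>{1..N}. Q k \<le> Pp k" and "\<exists>k\<in>{1..N}. Q k < Pp k"
      using i by (auto simp: Q_def)
  qed simp
  ultimately show False using minimal by fastforce
qed

end
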